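(* Let $\mathcal{A}$ be a finite set with $A=|\mathcal{A}|$, $\mathbb{X}$ a discrete abelian group, $\mathfrak{F}:\mathcal{A}^{\mathbb{X}}\to\mathcal{A}^{\mathbb{X}}$ a cellular automaton with finite symmetric neighbourhood $\mathbb{B}$ of the identity, $B=|\mathbb{B}|$, and local map $\mathfrak{f}:\mathcal{A}^{\mathbb{B}}\to\mathcal{A}$. If $\phi:\mathcal{A}\to\mathbb{R}$ is conserved by $\mathfrak{F}$, then $$\sum_{\mathbf{a}\in\mathcal{A}^{\mathbb{B}}}\phi(\mathfrak{f}(\mathbf{a}))=A^{B-1}\sum_{a\in\mathcal{A}}\phi(a).$$ In particular, if $\mathcal{A}=\{0,1,\dots,A-1\}\subset\mathbb{N}$ and $\phi(a)=a$ for all $a$, then $\sum_{\mathbf{a}\in\mathcal{A}^{\mathbb{B}}}\mathfrak{f}(\mathbf{a})=\tfrac12A^B(A-1)$.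
   Context: The CA is given by $\mathfrak{F}(\mathbf{a})_{\mathsf{x}}=\mathfrak{f}(\mathbf{a}|_{\mathbb{B}+\mathsf{x}})$. Vacuum states are $\phi^{-1}\{0\}$; $\phi$ is conserved by $\mathfrak{F}$ if for every configuration $\mathbf{a}$ with only finitely many non-vacuum sites, $\mathfrak{F}(\mathbf{a})$ also has finitely many non-vacuum sites and $\sum_{\mathsf{x}}\phi(\mathfrak{F}(\mathbf{a})_{\mathsf{x}})=\sum_{\mathsf{x}}\phi(a_{\mathsf{x}})$.
   Formalization: An extra hypothesis requires that either $\mathbb{X}$ is finite or $\phi$ has a vacuum state in $\mathcal{A}$, i.e. $\phi(v)=0$ for some $v\in\mathcal{A}$. The paper assumes this as well. *)

theory Defs
  imports Complex_Main "HOL-Library.FuncSet"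
begin

definition ca :: "(('x::ab_group_add \<Rightarrow> 'a) \<Rightarrow> 'a) \<Rightarrow> 'x set \<Rightarrow> ('x \<Rightarrow> 'a) \<Rightarrow> 'x \<Rightarrow> 'a" where
  "ca f B c = (\<lambda>x. f (restrict (\<lambda>b. c (b + x)) B))"

definition conserved :: "'a set \<Rightarrow> (('x::ab_group_add \<Rightarrow> 'a) \<Rightarrow> 'a) \<Rightarrow> 'x set \<Rightarrow> ('a \<Rightarrow> real) \<Rightarrow> bool" where
  "conserved Al f B \<phi> \<longleftrightarrow>
     (\<forall>c. (\<forall>x. c x \<in> Al) \<and> finite {x. \<phi> (c x) \<noteq> 0} \<longrightarrow>
        finite {x. \<phi> (ca f B c x) \<noteq> 0} \<and>
        (\<Sum>x\<in>{x. \<phi> (ca f B c x) \<noteq> 0}. \<phi> (ca f B c x)) = (\<Sum>x\<in>{x. \<phi> (c x) \<noteq> 0}. \<phi> (c x)))"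

end

theory Submission
  imports Defs "HOL-Real_Asymp.Real_Asymp"
begin

text \<open>
  Sum the conservation law over all patterns w on a finite window W, extended by a vacuum state
  outside W. Every site of W carries each state in equally many patterns, so before the update
  the total is |W| A^(|W|-1) times the sum of phi over the alphabet. After the update, every site
  whose neighbourhood lies inside W sees each local pattern equally often and contributes
  A^(|W|-B) times the sum of phi o f over all local patterns; the remaining sites lie near the
  boundary of W. Hence the two normalised averages differ by O(|boundary of W| / |W|).
  On a finite group take W to be the whole group, which has no boundary. Otherwise use the boxes
  of sums k_1 d_1 + ... + k_m d_m with 0 <= k_i < n, where d_1, ..., d_m are the differences of
  elements of B: their sizes grow only polynomially in n, so two consecutive boxes have almost the
  same size, and then the boundary of the smaller one is a small fraction of it.
\<close>

section \<open>Counting patterns on finite windows\<close>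

lemma sum_PiE_restrict:
  fixes g :: "('x \<Rightarrow> 'a) \<Rightarrow> 'b::semiring_1"
  assumes "T \<subseteq> W"
  shows "(\<Sum>w\<in>PiE W A. g (restrict w T)) = of_nat (card (PiE (W - T) A)) * (\<Sum>p\<in>PiE T A. g p)"
proof -
  have "(\<Sum>w\<in>PiE W A. g (restrict w T)) = (\<Sum>(p, q)\<in>PiE T A \<times> PiE (W - T) A. g p)"
    by (rule sum.reindex_bij_witness[where i = "\<lambda>(p, q) x. if x \<in> T then p x else q x"
          and j = "\<lambda>w. (restrict w T, restrict w (W - T))"])
      (use assms in \<open>auto simp: PiE_iff extensional_def fun_eq_iff\<close>)
  also have "\<dots> = (\<Sum>p\<in>PiE T A. \<Sum>q\<in>PiE (W - T) A. g p)"
    by (simp add: sum.cartesian_product' case_prod_beta)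
  finally show ?thesis
    by (simp add: sum_distrib_left mult.commute)
qed

lemma sum_PiE_restrict_compose:
  fixes g :: "('y \<Rightarrow> 'a) \<Rightarrow> 'b::comm_semiring_1" and h :: "'y \<Rightarrow> 'x"
  assumes "finite W" "inj_on h B" "h ` B \<subseteq> W"
  shows "(\<Sum>w\<in>PiE W (\<lambda>_. A). g (restrict (w \<circ> h) B)) * of_nat (card A) ^ card B
       = of_nat (card A) ^ card W * (\<Sum>p\<in>PiE B (\<lambda>_. A). g p)"
proof -
  have "(\<Sum>w\<in>PiE W (\<lambda>_. A). g (restrict (w \<circ> h) B))
      = (\<Sum>w\<in>PiE W (\<lambda>_. A). g (restrict (restrict w (h ` B) \<circ> h) B))"
    by (simp add: restrict_compose_left)
  also have "\<dots> = of_nat (card A ^ card (W - h ` B)) * (\<Sum>q\<in>PiE (h ` B) (\<lambda>_. A). g (restrict (q \<circ> h) B))"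
    using sum_PiE_restrict[OF assms(3), of "\<lambda>q. g (restrict (q \<circ> h) B)" "\<lambda>_. A"] assms(1)
    by (simp add: card_funcsetE)
  also have "(\<Sum>q\<in>PiE (h ` B) (\<lambda>_. A). g (restrict (q \<circ> h) B)) = (\<Sum>p\<in>PiE B (\<lambda>_. A). g p)"
  proof (rule sum.reindex_bij_witness[where i = "\<lambda>p. restrict (p \<circ> the_inv_into B h) (h ` B)"
        and j = "\<lambda>q. restrict (q \<circ> h) B"])
    fix q assume "q \<in> PiE (h ` B) (\<lambda>_. A)"
    then show "restrict (restrict (q \<circ> h) B \<circ> the_inv_into B h) (h ` B) = q"
      using assms(2) by (auto simp: PiE_iff extensional_def fun_eq_iff the_inv_into_f_f)
  next
    fix p assume "p \<in> PiE B (\<lambda>_. A)"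
    then show "restrict (restrict (p \<circ> the_inv_into B h) (h ` B) \<circ> h) B = p"
      using assms(2) by (auto simp: PiE_iff extensional_def fun_eq_iff the_inv_into_f_f)
  qed (use assms(2) in \<open>auto simp: the_inv_into_f_f\<close>)
  finally have sum_eq: "(\<Sum>w\<in>PiE W (\<lambda>_. A). g (restrict (w \<circ> h) B))
      = of_nat (card A ^ card (W - h ` B)) * (\<Sum>p\<in>PiE B (\<lambda>_. A). g p)" .
  have "finite (h ` B)"
    using assms(1,3) by (rule finite_subset[rotated])
  then have "card (W - h ` B) + card (h ` B) = card W"
    using assms(1,3) card_mono[OF assms(1,3)] by (simp add: card_Diff_subset)
  then have "card W = card (W - h ` B) + card B"
    using assms(2) by (simp add: card_image)
  then show ?thesis
    unfolding sum_eq by (simp add: power_add ac_simps)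
qed

lemma sum_PiE_eval:
  fixes g :: "'a \<Rightarrow> 'b::comm_semiring_1"
  assumes "finite W" "x \<in> W"
  shows "(\<Sum>w\<in>PiE W (\<lambda>_. A). g (w x)) * of_nat (card A) = of_nat (card A) ^ card W * (\<Sum>a\<in>A. g a)"
proof -
  have "(\<Sum>p\<in>PiE {x} (\<lambda>_. A). g (p x)) = (\<Sum>a\<in>A. g a)"
    by (rule sum.reindex_bij_witness[where i = "\<lambda>a. restrict (\<lambda>_. a) {x}" and j = "\<lambda>p. p x"])
      (auto simp: PiE_iff extensional_def fun_eq_iff)
  then show ?thesis
    using sum_PiE_restrict_compose[of W id "{x}" "\<lambda>p. g (p x)" A] assms by simp
qed

section \<open>Folner windows in abelian groups\<close>

definition nbhd_hull :: "'x::ab_group_add set \<Rightarrow> 'x set \<Rightarrow> 'x set" where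
  "nbhd_hull B W = {x. \<exists>b\<in>B. b + x \<in> W}"

definition nbhd_interior :: "'x::ab_group_add set \<Rightarrow> 'x set \<Rightarrow> 'x set" where
  "nbhd_interior B W = {x. \<forall>b\<in>B. b + x \<in> W}"

lemma finite_nbhd_hull:
  assumes "finite B" "finite W"
  shows "finite (nbhd_hull B W)"
proof (rule finite_subset)
  show "nbhd_hull B W \<subseteq> (\<lambda>(b, y). y - b) ` (B \<times> W)"
    by (force simp: nbhd_hull_def)
qed (use assms in simp)

lemma subset_nbhd_hull: "0 \<in> B \<Longrightarrow> W \<subseteq> nbhd_hull B W"
  by (force simp: nbhd_hull_def)

lemma nbhd_interior_subset: "0 \<in> B \<Longrightarrow> nbhd_interior B W \<subseteq> W"
  by (force simp: nbhd_interior_def)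

lemma nbhd_hull_UNIV: "0 \<in> B \<Longrightarrow> nbhd_hull B UNIV = UNIV"
  by (auto simp: nbhd_hull_def)

lemma nbhd_interior_UNIV: "nbhd_interior B UNIV = UNIV"
  by (simp add: nbhd_interior_def)

lemma card_nbhd_boundary_le:
  fixes B W W' :: "'x::ab_group_add set"
  assumes "finite B" "finite W'" "W \<subseteq> W'"
    and shifts: "\<And>b b'. b \<in> B \<Longrightarrow> b' \<in> B \<Longrightarrow> (\<lambda>y. y + (b' - b)) ` W \<subseteq> W'"
  shows "card (nbhd_hull B W - nbhd_interior B W) \<le> card B * (card W' - card W)"
proof -
  have "nbhd_hull B W - nbhd_interior B W \<subseteq> (\<Union>b'\<in>B. (\<lambda>y. y - b') ` (W' - W))"
  proof
    fix x assume "x \<in> nbhd_hull B W - nbhd_interior B W"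
    then obtain b b' where b: "b \<in> B" "b + x \<in> W" and b': "b' \<in> B" "b' + x \<notin> W"
      by (auto simp: nbhd_hull_def nbhd_interior_def)
    have "(b + x) + (b' - b) \<in> W'"
      using shifts[OF b(1) b'(1)] b(2) by blast
    then have "b' + x \<in> W' - W"
      using b' by (simp add: algebra_simps)
    then show "x \<in> (\<Union>b'\<in>B. (\<lambda>y. y - b') ` (W' - W))"
      using b'(1) by (force intro: rev_image_eqI)
  qed
  then have "card (nbhd_hull B W - nbhd_interior B W) \<le> card (\<Union>b'\<in>B. (\<lambda>y. y - b') ` (W' - W))"
    using assms(1,2) by (intro card_mono) auto
  also have "\<dots> \<le> (\<Sum>b'\<in>B. card ((\<lambda>y. y - b') ` (W' - W)))"
    using assms(1) by (rule card_UN_le)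
  also have "\<dots> \<le> (\<Sum>b'\<in>B. card (W' - W))"
    by (intro sum_mono card_image_le) (use assms(2) in auto)
  also have "\<dots> = card B * (card W' - card W)"
    using assms(2,3) by (simp add: card_Diff_subset finite_subset)
  finally show ?thesis .
qed

definition lattice_box :: "'x::ab_group_add set \<Rightarrow> nat \<Rightarrow> 'x set" where
  "lattice_box D n = (\<lambda>k. \<Sum>d\<in>D. \<Sum>i<k d. d) ` PiE D (\<lambda>_. {..<n})"

lemma finite_lattice_box: "finite D \<Longrightarrow> finite (lattice_box D n)"
  by (simp add: lattice_box_def finite_PiE)

lemma card_lattice_box_le: "finite D \<Longrightarrow> card (lattice_box D n) \<le> n ^ card D"
  unfolding lattice_box_def using card_image_le[of "PiE D (\<lambda>_. {..<n})"]
  by (simp add: finite_PiE card_funcsetE)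

lemma zero_in_lattice_box: "0 \<in> lattice_box D (Suc n)"
proof -
  have "(\<Sum>d\<in>D. \<Sum>i<(\<lambda>_\<in>D. 0::nat) d. d) = 0"
    by (intro sum.neutral) simp
  moreover have "(\<lambda>_\<in>D. 0) \<in> PiE D (\<lambda>_. {..<Suc n})"
    by auto
  ultimately show ?thesis
    unfolding lattice_box_def by (rule image_eqI[OF sym])
qed

lemma lattice_box_mono: "lattice_box D n \<subseteq> lattice_box D (Suc n)"
  unfolding lattice_box_def by (intro image_mono PiE_mono) auto

lemma lattice_box_shift:
  assumes "finite D" "d \<in> D"
  shows "(\<lambda>y. y + d) ` lattice_box D n \<subseteq> lattice_box D (Suc n)"
proof
  fix z assume "z \<in> (\<lambda>y. y + d) ` lattice_box D n"
  then obtain k where k: "k \<in> PiE D (\<lambda>_. {..<n})" and z: "z = (\<Sum>d'\<in>D. \<Sum>i<k d'. d') + d"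
    unfolding lattice_box_def by auto
  define k' where "k' = k(d := Suc (k d))"
  have step: "(\<Sum>i<k' d'. d') = (\<Sum>i<k d'. d') + (if d' = d then d else 0)" for d'
    by (simp add: k'_def)
  have "(\<Sum>d'\<in>D. \<Sum>i<k' d'. d') = (\<Sum>d'\<in>D. \<Sum>i<k d'. d') + (\<Sum>d'\<in>D. if d' = d then d else 0)"
    unfolding step by (rule sum.distrib)
  also have "\<dots> = z"
    using assms z by simp
  finally have "(\<Sum>d'\<in>D. \<Sum>i<k' d'. d') = z" .
  moreover have "k' \<in> PiE D (\<lambda>_. {..<Suc n})"
    using k assms(2) unfolding k'_def by (auto simp: PiE_iff extensional_def)
  ultimately show "z \<in> lattice_box D (Suc n)"
    unfolding lattice_box_def by (rule image_eqI[OF sym])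
qed

lemma exists_slow_growth_step:
  fixes a :: "nat \<Rightarrow> real"
  assumes "0 < a 0" and poly: "\<And>n. a n \<le> C * (1 + real n) ^ k" and "0 < e"
  shows "\<exists>n. a (Suc n) \<le> (1 + e) * a n"
proof (rule ccontr)
  assume "\<nexists>n. a (Suc n) \<le> (1 + e) * a n"
  then have fast: "(1 + e) * a n < a (Suc n)" for n
    by (simp add: not_le)
  have geometric: "(1 + e) ^ n * a 0 \<le> a n" for n
  proof (induction n)
    case (Suc n)
    have "(1 + e) ^ Suc n * a 0 \<le> (1 + e) * a n"
      using Suc.IH \<open>0 < e\<close> by (simp add: mult.assoc)
    also have "\<dots> \<le> a (Suc n)"
      using fast less_imp_le by blast
    finally show ?case .
  qed simp
  have "((\<lambda>n. C * (1 + real n) ^ k / (1 + e) ^ n) \<longlongrightarrow> 0) at_top"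
    using \<open>0 < e\<close> by real_asymp
  then have "\<forall>\<^sub>F n in at_top. C * (1 + real n) ^ k / (1 + e) ^ n < a 0"
    using \<open>0 < a 0\<close> by (rule order_tendstoD(2))
  then obtain n where "C * (1 + real n) ^ k / (1 + e) ^ n < a 0"
    by (auto simp: eventually_at_top_linorder)
  then have "a n < (1 + e) ^ n * a 0"
    using poly[of n] \<open>0 < e\<close> by (simp add: divide_less_eq mult.commute)
  with geometric[of n] show False
    by simp
qed

lemma exists_slow_growing_lattice_box:
  assumes "finite D" "0 < e"
  shows "\<exists>n. real (card (lattice_box D (Suc (Suc n)))) \<le> (1 + e) * real (card (lattice_box D (Suc n)))"
proof -
  have "0 < real (card (lattice_box D (Suc 0)))"
    using zero_in_lattice_box finite_lattice_box[OF \<open>finite D\<close>] card_gt_0_iff by fastforce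
  moreover have "real (card (lattice_box D (Suc n))) \<le> 1 * (1 + real n) ^ card D" for n
    using of_nat_mono[OF card_lattice_box_le[OF \<open>finite D\<close>, of "Suc n"]] by simp
  ultimately show ?thesis
    using exists_slow_growth_step[of "\<lambda>n. real (card (lattice_box D (Suc n)))" 1 "card D" e] \<open>0 < e\<close>
    by auto
qed

lemma exists_folner_window:
  fixes B :: "'x::ab_group_add set"
  assumes "finite B" "0 < e"
  shows "\<exists>W. finite W \<and> W \<noteq> {} \<and> real (card (nbhd_hull B W - nbhd_interior B W)) \<le> e * real (card W)"
proof -
  define D where "D = (\<lambda>(b, b'). b' - b) ` (B \<times> B)"
  have "finite D"
    using assms(1) by (simp add: D_def)
  define \<epsilon> where "\<epsilon> = e / (1 + real (card B))"
  have "0 < \<epsilon>"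
    using assms(2) by (simp add: \<epsilon>_def)
  obtain n where n: "real (card (lattice_box D (Suc (Suc n)))) \<le> (1 + \<epsilon>) * real (card (lattice_box D (Suc n)))"
    using exists_slow_growing_lattice_box[OF \<open>finite D\<close> \<open>0 < \<epsilon>\<close>] by blast
  define W W' where "W = lattice_box D (Suc n)" and "W' = lattice_box D (Suc (Suc n))"
  have "finite W" "finite W'" "W \<subseteq> W'"
    using \<open>finite D\<close> by (simp_all add: W_def W'_def finite_lattice_box lattice_box_mono)
  have boundary: "card (nbhd_hull B W - nbhd_interior B W) \<le> card B * (card W' - card W)"
  proof (rule card_nbhd_boundary_le[OF assms(1) \<open>finite W'\<close> \<open>W \<subseteq> W'\<close>])
    fix b b' assume "b \<in> B" "b' \<in> B"
    then have "b' - b \<in> D"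
      by (force simp: D_def)
    then show "(\<lambda>y. y + (b' - b)) ` W \<subseteq> W'"
      unfolding W_def W'_def by (rule lattice_box_shift[OF \<open>finite D\<close>])
  qed
  have growth: "real (card W') - real (card W) \<le> \<epsilon> * real (card W)"
    using n by (simp add: W_def W'_def algebra_simps)
  have "card W \<le> card W'"
    using \<open>finite W'\<close> \<open>W \<subseteq> W'\<close> by (rule card_mono)
  from boundary have "real (card (nbhd_hull B W - nbhd_interior B W)) \<le> real (card B * (card W' - card W))"
    by (rule of_nat_mono)
  also have "\<dots> \<le> real (card B) * (\<epsilon> * real (card W))"
    using growth \<open>card W \<le> card W'\<close> by (simp add: of_nat_diff mult_left_mono)
  also have "\<dots> \<le> e * real (card W)"
  proof -
    have "real (card B) * \<epsilon> \<le> e"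
      using assms(2) by (simp add: \<epsilon>_def field_simps)
    then show ?thesis
      by (simp add: mult.assoc[symmetric] mult_right_mono)
  qed
  finally show ?thesis
    using \<open>finite W\<close> zero_in_lattice_box[of D n] by (auto simp: W_def)
qed

section \<open>Averaging the conservation law over a window\<close>

definition pad :: "'x set \<Rightarrow> 'a \<Rightarrow> ('x \<Rightarrow> 'a) \<Rightarrow> 'x \<Rightarrow> 'a" where
  "pad W v w y = (if y \<in> W then w y else v)"

lemma conservedD:
  assumes "conserved Al f B \<phi>" "\<forall>x. c x \<in> Al" "finite {x. \<phi> (c x) \<noteq> 0}"
  shows "finite {x. \<phi> (ca f B c x) \<noteq> 0}"
    and "(\<Sum>x\<in>{x. \<phi> (ca f B c x) \<noteq> 0}. \<phi> (ca f B c x)) = (\<Sum>x\<in>{x. \<phi> (c x) \<noteq> 0}. \<phi> (c x))"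
  using assms unfolding conserved_def by auto

lemma conserved_vacuum_image:
  fixes B :: "'x::ab_group_add set"
  assumes "conserved Al f B \<phi>" "infinite (UNIV :: 'x set)" "v \<in> Al" "\<phi> v = 0"
  shows "\<phi> (f (restrict (\<lambda>_. v) B)) = 0"
proof (rule ccontr)
  assume "\<phi> (f (restrict (\<lambda>_. v) B)) \<noteq> 0"
  then have "{x. \<phi> (ca f B (\<lambda>_. v) x) \<noteq> 0} = (UNIV :: 'x set)"
    by (simp add: ca_def)
  moreover have "finite {x. \<phi> (ca f B (\<lambda>_::'x. v) x) \<noteq> 0}"
    by (rule conservedD(1)[OF assms(1)]) (simp_all add: assms(3,4))
  ultimately show False
    using assms(2) by simp
qed

lemma conserved_sum_UNIV:
  fixes B :: "'x::ab_group_add set"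
  assumes "conserved Al f B \<phi>" "finite (UNIV :: 'x set)" "\<forall>x. c x \<in> Al"
  shows "(\<Sum>x\<in>UNIV. \<phi> (ca f B c x)) = (\<Sum>x\<in>UNIV. \<phi> (c x))"
proof -
  have "finite {x. \<phi> (c x) \<noteq> 0}"
    using assms(2) by (rule finite_subset[OF subset_UNIV])
  with assms(1,3) have "(\<Sum>x\<in>{x. \<phi> (ca f B c x) \<noteq> 0}. \<phi> (ca f B c x)) = (\<Sum>x\<in>{x. \<phi> (c x) \<noteq> 0}. \<phi> (c x))"
    by (rule conservedD(2))
  moreover have "(\<Sum>x\<in>{x. g x \<noteq> 0}. g x) = (\<Sum>x\<in>UNIV. g x)" for g :: "'x \<Rightarrow> real"
    by (rule sum.mono_neutral_left) (use assms(2) in auto)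
  ultimately show ?thesis
    by simp
qed

lemma conserved_window_sum:
  assumes cons: "conserved Al f B \<phi>" and "finite B" "finite W" "v \<in> Al" "\<phi> v = 0"
    and vacuum: "\<phi> (f (restrict (\<lambda>_. v) B)) = 0" and w: "w \<in> PiE W (\<lambda>_. Al)"
  shows "(\<Sum>x\<in>nbhd_hull B W. \<phi> (ca f B (pad W v w) x)) = (\<Sum>x\<in>W. \<phi> (w x))"
proof -
  have "\<forall>x. pad W v w x \<in> Al"
    using w \<open>v \<in> Al\<close> by (auto simp: pad_def)
  have supp: "{x. \<phi> (pad W v w x) \<noteq> 0} \<subseteq> W"
    using \<open>\<phi> v = 0\<close> by (auto simp: pad_def)
  have supp_image: "{x. \<phi> (ca f B (pad W v w) x) \<noteq> 0} \<subseteq> nbhd_hull B W"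
  proof
    fix x assume x: "x \<in> {x. \<phi> (ca f B (pad W v w) x) \<noteq> 0}"
    show "x \<in> nbhd_hull B W"
    proof (rule ccontr)
      assume "x \<notin> nbhd_hull B W"
      then have "restrict (\<lambda>b. pad W v w (b + x)) B = restrict (\<lambda>_. v) B"
        by (auto simp: pad_def nbhd_hull_def intro!: restrict_ext)
      then show False
        using x vacuum by (simp add: ca_def)
    qed
  qed
  have "(\<Sum>x\<in>{x. \<phi> (ca f B (pad W v w) x) \<noteq> 0}. \<phi> (ca f B (pad W v w) x))
      = (\<Sum>x\<in>{x. \<phi> (pad W v w x) \<noteq> 0}. \<phi> (pad W v w x))"
    by (rule conservedD(2)[OF cons \<open>\<forall>x. pad W v w x \<in> Al\<close> finite_subset[OF supp \<open>finite W\<close>]])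
  moreover have "(\<Sum>x\<in>{x. \<phi> (ca f B (pad W v w) x) \<noteq> 0}. \<phi> (ca f B (pad W v w) x))
      = (\<Sum>x\<in>nbhd_hull B W. \<phi> (ca f B (pad W v w) x))"
    by (rule sum.mono_neutral_left[OF finite_nbhd_hull[OF \<open>finite B\<close> \<open>finite W\<close>] supp_image]) auto
  moreover have "(\<Sum>x\<in>{x. \<phi> (pad W v w x) \<noteq> 0}. \<phi> (pad W v w x)) = (\<Sum>x\<in>W. \<phi> (w x))"
    by (subst sum.mono_neutral_left[OF \<open>finite W\<close> supp]) (auto simp: pad_def)
  ultimately show ?thesis
    by simp
qed

lemma sum_windows_total:
  fixes \<phi> :: "'a \<Rightarrow> real"
  assumes "finite W"
    and conservation: "\<And>w. w \<in> PiE W (\<lambda>_. Al) \<Longrightarrow>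
      (\<Sum>x\<in>nbhd_hull B W. \<phi> (ca f B (pad W v w) x)) = (\<Sum>x\<in>W. \<phi> (w x))"
  shows "(\<Sum>x\<in>nbhd_hull B W. \<Sum>w\<in>PiE W (\<lambda>_. Al). \<phi> (ca f B (pad W v w) x)) * card Al
    = real (card W) * real (card Al) ^ card W * (\<Sum>a\<in>Al. \<phi> a)"
proof -
  have "(\<Sum>x\<in>nbhd_hull B W. \<Sum>w\<in>PiE W (\<lambda>_. Al). \<phi> (ca f B (pad W v w) x))
      = (\<Sum>x\<in>W. \<Sum>w\<in>PiE W (\<lambda>_. Al). \<phi> (w x))"
    by (subst (1 2) sum.swap) (simp add: conservation)
  also have "\<dots> * card Al = (\<Sum>x\<in>W. (\<Sum>w\<in>PiE W (\<lambda>_. Al). \<phi> (w x)) * card Al)"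
    by (simp add: sum_distrib_right)
  also have "\<dots> = (\<Sum>x\<in>W. real (card Al) ^ card W * (\<Sum>a\<in>Al. \<phi> a))"
    by (intro sum.cong refl sum_PiE_eval[OF \<open>finite W\<close>])
  finally show ?thesis
    by simp
qed

lemma sum_windows_at_interior:
  fixes \<phi> :: "'a \<Rightarrow> real" and B :: "'x::ab_group_add set"
  assumes "finite W" "x \<in> nbhd_interior B W"
  shows "(\<Sum>w\<in>PiE W (\<lambda>_. Al). \<phi> (ca f B (pad W v w) x)) * real (card Al) ^ card B
    = real (card Al) ^ card W * (\<Sum>p\<in>PiE B (\<lambda>_. Al). \<phi> (f p))"
proof -
  have "(\<lambda>b. b + x) ` B \<subseteq> W"
    using assms(2) by (auto simp: nbhd_interior_def)
  then have "ca f B (pad W v w) x = f (restrict (w \<circ> (\<lambda>b. b + x)) B)" for w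
    unfolding ca_def pad_def by (intro arg_cong[where f = f] restrict_ext) auto
  then show ?thesis
    using sum_PiE_restrict_compose[OF assms(1) _ \<open>(\<lambda>b. b + x) ` B \<subseteq> W\<close>] by simp
qed

lemma abs_sum_windows_le:
  fixes \<phi> :: "'a \<Rightarrow> real"
  assumes "finite Al" "finite W" "v \<in> Al" "\<forall>p\<in>PiE B (\<lambda>_. Al). f p \<in> Al"
  shows "\<bar>\<Sum>w\<in>PiE W (\<lambda>_. Al). \<phi> (ca f B (pad W v w) x)\<bar> \<le> real (card Al) ^ card W * (\<Sum>a\<in>Al. \<bar>\<phi> a\<bar>)"
proof -
  have "\<bar>\<phi> (ca f B (pad W v w) x)\<bar> \<le> (\<Sum>a\<in>Al. \<bar>\<phi> a\<bar>)" if "w \<in> PiE W (\<lambda>_. Al)" for w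
  proof -
    have "ca f B (pad W v w) x \<in> Al"
      using that assms(3,4) by (auto simp: ca_def pad_def PiE_iff)
    then show ?thesis
      using assms(1) by (intro member_le_sum) auto
  qed
  then have "\<bar>\<Sum>w\<in>PiE W (\<lambda>_. Al). \<phi> (ca f B (pad W v w) x)\<bar> \<le> (\<Sum>w\<in>PiE W (\<lambda>_. Al). \<Sum>a\<in>Al. \<bar>\<phi> a\<bar>)"
    by (intro order_trans[OF sum_abs] sum_mono)
  then show ?thesis
    using assms(2) by (simp add: card_funcsetE)
qed

lemma boundary_defect_bound:
  fixes t :: "'x \<Rightarrow> real"
  assumes "finite E" "I \<subseteq> W" "W \<subseteq> E"
    and "(\<Sum>x\<in>E. t x) = real (card W) * p" "\<And>x. x \<in> I \<Longrightarrow> t x = s" "\<And>x. \<bar>t x\<bar> \<le> M"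
  shows "real (card W) * \<bar>p - s\<bar> \<le> real (card (E - I)) * (M + \<bar>s\<bar>)"
proof -
  have "finite W"
    using assms(1,3) by (rule finite_subset[rotated])
  have "(\<Sum>x\<in>E. t x) = (\<Sum>x\<in>E - I. t x) + (\<Sum>x\<in>I. s)"
    using assms(1-3,5) sum.subset_diff[of I E t] by auto
  moreover have "real (card W) * s = (\<Sum>x\<in>W - I. s) + (\<Sum>x\<in>I. s)"
    using sum.subset_diff[OF \<open>I \<subseteq> W\<close> \<open>finite W\<close>, of "\<lambda>_. s"] by simp
  ultimately have "real (card W) * (p - s) = (\<Sum>x\<in>E - I. t x) - (\<Sum>x\<in>W - I. s)"
    using assms(4) by (simp add: algebra_simps)
  then have "real (card W) * \<bar>p - s\<bar> = \<bar>(\<Sum>x\<in>E - I. t x) - (\<Sum>x\<in>W - I. s)\<bar>"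
    by (metis abs_mult abs_of_nat)
  also have "\<dots> \<le> (\<Sum>x\<in>E - I. \<bar>t x\<bar>) + real (card (W - I)) * \<bar>s\<bar>"
    by (rule order_trans[OF abs_triangle_ineq4 add_mono[OF sum_abs]]) (simp add: abs_mult)
  also have "\<dots> \<le> real (card (E - I)) * M + real (card (E - I)) * \<bar>s\<bar>"
  proof (rule add_mono)
    show "(\<Sum>x\<in>E - I. \<bar>t x\<bar>) \<le> real (card (E - I)) * M"
      using sum_mono[of "E - I" "\<lambda>x. \<bar>t x\<bar>" "\<lambda>_. M"] assms(6) by simp
    have "card (W - I) \<le> card (E - I)"
      using assms(1,3) by (intro card_mono) auto
    then show "real (card (W - I)) * \<bar>s\<bar> \<le> real (card (E - I)) * \<bar>s\<bar>"
      by (simp add: mult_right_mono)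
  qed
  finally show ?thesis
    by (simp add: distrib_left)
qed

lemma window_balance:
  fixes \<phi> :: "'a \<Rightarrow> real" and B W :: "'x::ab_group_add set"
  assumes "finite Al" "v \<in> Al" "finite B" "0 \<in> B" "\<forall>p\<in>PiE B (\<lambda>_. Al). f p \<in> Al" "finite W"
    and conservation: "\<And>w. w \<in> PiE W (\<lambda>_. Al) \<Longrightarrow>
      (\<Sum>x\<in>nbhd_hull B W. \<phi> (ca f B (pad W v w) x)) = (\<Sum>x\<in>W. \<phi> (w x))"
  shows "real (card W) * \<bar>(\<Sum>a\<in>Al. \<phi> a) / card Al - (\<Sum>p\<in>PiE B (\<lambda>_. Al). \<phi> (f p)) / real (card Al) ^ card B\<bar>
    \<le> real (card (nbhd_hull B W - nbhd_interior B W))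
       * ((\<Sum>a\<in>Al. \<bar>\<phi> a\<bar>) + \<bar>(\<Sum>p\<in>PiE B (\<lambda>_. Al). \<phi> (f p)) / real (card Al) ^ card B\<bar>)"
proof (rule boundary_defect_bound)
  define N where "N = real (card Al) ^ card W"
  have "0 < card Al"
    using assms(1,2) card_gt_0_iff by blast
  then have "0 < N"
    by (simp add: N_def)
  define t where "t x = (\<Sum>w\<in>PiE W (\<lambda>_. Al). \<phi> (ca f B (pad W v w) x)) / N" for x
  show "(\<Sum>x\<in>nbhd_hull B W. t x) = real (card W) * ((\<Sum>a\<in>Al. \<phi> a) / card Al)"
    using sum_windows_total[OF assms(6) conservation] \<open>0 < N\<close> \<open>0 < card Al\<close>
    by (simp add: t_def N_def sum_divide_distrib[symmetric] field_simps)
  show "t x = (\<Sum>p\<in>PiE B (\<lambda>_. Al). \<phi> (f p)) / real (card Al) ^ card B" if "x \<in> nbhd_interior B W" for x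
    using sum_windows_at_interior[OF assms(6) that] \<open>0 < N\<close> \<open>0 < card Al\<close>
    by (simp add: t_def N_def field_simps)
  show "\<bar>t x\<bar> \<le> (\<Sum>a\<in>Al. \<bar>\<phi> a\<bar>)" for x
    using abs_sum_windows_le[OF assms(1,6,2,5)] \<open>0 < N\<close>
    by (simp add: t_def N_def abs_divide field_simps)
qed (use assms(3,4,6) in \<open>simp_all add: finite_nbhd_hull nbhd_interior_subset subset_nbhd_hull\<close>)

lemma local_rule_average_eq:
  fixes \<phi> :: "'a \<Rightarrow> real" and B :: "'x::ab_group_add set"
  assumes "finite Al" "finite B" "0 \<in> B" "\<forall>p\<in>PiE B (\<lambda>_. Al). f p \<in> Al"
    and windows: "\<And>e. 0 < e \<Longrightarrow> \<exists>W v. finite W \<and> W \<noteq> {} \<and> v \<in> Al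
      \<and> real (card (nbhd_hull B W - nbhd_interior B W)) \<le> e * real (card W)
      \<and> (\<forall>w\<in>PiE W (\<lambda>_. Al). (\<Sum>x\<in>nbhd_hull B W. \<phi> (ca f B (pad W v w) x)) = (\<Sum>x\<in>W. \<phi> (w x)))"
  shows "(\<Sum>p\<in>PiE B (\<lambda>_. Al). \<phi> (f p)) / real (card Al) ^ card B = (\<Sum>a\<in>Al. \<phi> a) / real (card Al)"
proof -
  define X where "X = (\<Sum>a\<in>Al. \<phi> a) / real (card Al) - (\<Sum>p\<in>PiE B (\<lambda>_. Al). \<phi> (f p)) / real (card Al) ^ card B"
  define K where "K = (\<Sum>a\<in>Al. \<bar>\<phi> a\<bar>) + \<bar>(\<Sum>p\<in>PiE B (\<lambda>_. Al). \<phi> (f p)) / real (card Al) ^ card B\<bar>"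
  have "0 \<le> K"
    by (simp add: K_def sum_nonneg)
  have "\<bar>X\<bar> \<le> 0 + e" if "0 < e" for e
  proof -
    obtain W v where W: "finite W" "W \<noteq> {}" "v \<in> Al"
      and small_boundary: "real (card (nbhd_hull B W - nbhd_interior B W)) \<le> e / (K + 1) * real (card W)"
      and conservation: "\<forall>w\<in>PiE W (\<lambda>_. Al). (\<Sum>x\<in>nbhd_hull B W. \<phi> (ca f B (pad W v w) x)) = (\<Sum>x\<in>W. \<phi> (w x))"
      using windows[of "e / (K + 1)"] \<open>0 < e\<close> \<open>0 \<le> K\<close> by auto
    have "real (card W) * \<bar>X\<bar> \<le> real (card (nbhd_hull B W - nbhd_interior B W)) * K"
      unfolding X_def K_def using conservation
      by (intro window_balance[OF assms(1) W(3) assms(2-4) W(1)]) blast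
    also have "\<dots> \<le> real (card W) * (e / (K + 1) * K)"
      using mult_right_mono[OF small_boundary \<open>0 \<le> K\<close>] by (simp add: ac_simps)
    finally have "\<bar>X\<bar> \<le> e / (K + 1) * K"
      by (rule mult_left_le_imp_le) (use W in \<open>simp add: card_gt_0_iff\<close>)
    also have "\<dots> \<le> e"
      using \<open>0 < e\<close> \<open>0 \<le> K\<close> by (simp add: field_simps)
    finally show ?thesis
      by simp
  qed
  then have "\<bar>X\<bar> \<le> 0"
    by (rule field_le_epsilon)
  then show ?thesis
    by (simp add: X_def)
qed

lemma exists_conserving_window:
  fixes \<phi> :: "'a \<Rightarrow> real" and B :: "'x::ab_group_add set"
  assumes "finite B" "0 \<in> B" "Al \<noteq> {}" "0 < e"
    and vacuum: "finite (UNIV :: 'x set) \<or> (\<exists>v\<in>Al. \<phi> v = 0)"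
    and cons: "conserved Al f B \<phi>"
  shows "\<exists>W v. finite W \<and> W \<noteq> {} \<and> v \<in> Al
      \<and> real (card (nbhd_hull B W - nbhd_interior B W)) \<le> e * real (card W)
      \<and> (\<forall>w\<in>PiE W (\<lambda>_. Al). (\<Sum>x\<in>nbhd_hull B W. \<phi> (ca f B (pad W v w) x)) = (\<Sum>x\<in>W. \<phi> (w x)))"
proof (cases "finite (UNIV :: 'x set)")
  case True
  obtain v where "v \<in> Al"
    using \<open>Al \<noteq> {}\<close> by blast
  moreover have "pad UNIV v w = w" for w :: "'x \<Rightarrow> 'a"
    by (simp add: pad_def fun_eq_iff)
  ultimately show ?thesis
    using True conserved_sum_UNIV[OF cons True] \<open>0 < e\<close>
    by (intro exI[of _ UNIV] exI[of _ v]) (simp add: nbhd_hull_UNIV[OF \<open>0 \<in> B\<close>] nbhd_interior_UNIV PiE_iff)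
next
  case False
  then obtain v where v: "v \<in> Al" "\<phi> v = 0"
    using vacuum by blast
  obtain W where "finite W" "W \<noteq> {}"
    "real (card (nbhd_hull B W - nbhd_interior B W)) \<le> e * real (card W)"
    using exists_folner_window[OF \<open>finite B\<close> \<open>0 < e\<close>] by blast
  then show ?thesis
    using conserved_window_sum[OF cons \<open>finite B\<close> \<open>finite W\<close> v conserved_vacuum_image[OF cons False v]] v
    by blast
qed

theorem conserved_sum_local_rule:
  fixes Al :: "'a set" and B :: "'x::ab_group_add set"
    and f :: "('x \<Rightarrow> 'a) \<Rightarrow> 'a" and \<phi> :: "'a \<Rightarrow> real"
  assumes "finite Al" "finite B" "0 \<in> B" "\<forall>p\<in>PiE B (\<lambda>_. Al). f p \<in> Al"
    and "finite (UNIV :: 'x set) \<or> (\<exists>v\<in>Al. \<phi> v = 0)" "conserved Al f B \<phi>"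
  shows "(\<Sum>p\<in>PiE B (\<lambda>_. Al). \<phi> (f p)) = real (card Al) ^ (card B - 1) * (\<Sum>a\<in>Al. \<phi> a)"
proof (cases "Al = {}")
  case True
  then show ?thesis
    using \<open>0 \<in> B\<close> by (auto simp: PiE_eq_empty_iff)
next
  case False
  have "(\<Sum>p\<in>PiE B (\<lambda>_. Al). \<phi> (f p)) / real (card Al) ^ card B = (\<Sum>a\<in>Al. \<phi> a) / real (card Al)"
    using exists_conserving_window[OF assms(2,3) False _ assms(5,6)]
    by (intro local_rule_average_eq[OF assms(1-4)])
  moreover have "real (card Al) ^ card B = real (card Al) * real (card Al) ^ (card B - 1)"
    using \<open>finite B\<close> \<open>0 \<in> B\<close> by (metis card_gt_0_iff empty_iff power_eq_if not_gr0)
  moreover have "0 < card Al"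
    using False \<open>finite Al\<close> by (simp add: card_gt_0_iff)
  ultimately show ?thesis
    by (simp add: field_simps)
qed

theorem corollary10:
  fixes Al :: "'a set" and B :: "'x::ab_group_add set"
    and f :: "('x \<Rightarrow> 'a) \<Rightarrow> 'a" and \<phi> :: "'a \<Rightarrow> real"
  assumes "finite Al"
    and "finite B" and "0 \<in> B" and "\<forall>b\<in>B. - b \<in> B"
    and "\<forall>p\<in>PiE B (\<lambda>_. Al). f p \<in> Al"
    and "finite (UNIV :: 'x set) \<or> (\<exists>v\<in>Al. \<phi> v = 0)"
    and "conserved Al f B \<phi>"
  shows "(\<Sum>p\<in>PiE B (\<lambda>_. Al). \<phi> (f p)) = real (card Al) ^ (card B - 1) * (\<Sum>a\<in>Al. \<phi> a)
    \<and> (\<forall>(g :: ('x \<Rightarrow> nat) \<Rightarrow> nat) (N :: nat).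
           (\<forall>p\<in>PiE B (\<lambda>_. {0..<N}). g p \<in> {0..<N}) \<and> conserved {0..<N} g B real \<longrightarrow>
           real (\<Sum>p\<in>PiE B (\<lambda>_. {0..<N}). g p) = real N ^ card B * (real N - 1) / 2)"
proof (intro conjI allI impI)
  show "(\<Sum>p\<in>PiE B (\<lambda>_. Al). \<phi> (f p)) = real (card Al) ^ (card B - 1) * (\<Sum>a\<in>Al. \<phi> a)"
    using assms(1-3,5-7) by (rule conserved_sum_local_rule)
next
  fix g :: "('x \<Rightarrow> nat) \<Rightarrow> nat" and N :: nat
  assume g: "(\<forall>p\<in>PiE B (\<lambda>_. {0..<N}). g p \<in> {0..<N}) \<and> conserved {0..<N} g B real"
  have "card B \<noteq> 0"
    using assms(2,3) by auto
  show "real (\<Sum>p\<in>PiE B (\<lambda>_. {0..<N}). g p) = real N ^ card B * (real N - 1) / 2"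
  proof (cases "N = 0")
    case True
    then show ?thesis
      using \<open>0 \<in> B\<close> \<open>card B \<noteq> 0\<close> by (simp add: PiE_eq_empty_iff)
  next
    case False
    have gauss: "(\<Sum>a\<in>{0..<n}. real a) = real n * (real n - 1) / 2" for n
      by (induction n) (simp_all add: field_simps)
    have "(\<Sum>p\<in>PiE B (\<lambda>_. {0..<N}). real (g p)) = real N ^ (card B - 1) * (\<Sum>a\<in>{0..<N}. real a)"
      using conserved_sum_local_rule[of "{0..<N}" B g real] assms(2,3) g False by auto
    also have "\<dots> = real N ^ card B * (real N - 1) / 2"
      using \<open>card B \<noteq> 0\<close> by (simp add: gauss power_eq_if)
    finally show ?thesis
      by simp
  qed
qed

end
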